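(* Let $q$ be a prime power, $n\ge 2$, and let $\mathcal{F}=(\mathcal{F}_1,\ldots,\mathcal{F}_r)$ be a flag of type $(t_1,\ldots,t_r)$ on $\mathbb{F}_{q^n}$. Let $\beta\in\mathbb{F}_{q^n}^*$. Then $|\mathrm{Orb}_{\beta}(\mathcal{F}_i)|$ divides $|\mathrm{Orb}_{\beta}(\mathcal{F})|$ for every $1\le i\le r$. In particular, $$\mathrm{lcm}\left\{ |\beta^{q^{t_i}-1}| \ : \ 1\le i\le r\right\} \text{ divides } |\mathrm{Orb}_{\beta}(\mathcal{F})|.$$
   Context: $\mathbb{F}_{q^n}$ is regarded as an $n$-dimensional $\mathbb{F}_q$-vector space. A flag of type $(t_1,\ldots,t_r)$ on $\mathbb{F}_{q^n}$ is a sequence $\mathcal{F}=(\mathcal{F}_1,\ldots,\mathcal{F}_r)$ of $\mathbb{F}_q$-subspaces with $\{0\}\subsetneq\mathcal{F}_1\subsetneq\cdots\subsetneq\mathcal{F}_r\subsetneq\mathbb{F}_{q^n}$ and $\dim_{\mathbb{F}_q}\mathcal{F}_i=t_i$. For $\beta\in\mathbb{F}_{q^n}^*$, $|\beta|$ denotes its multiplicative order; for an $\mathbb{F}_q$-subspace $\mathcal{U}$, $\mathcal{U}\beta=\{u\beta: u\in\mathcal{U}\}$ and $\mathcal{F}\beta=(\mathcal{F}_1\beta,\ldots,\mathcal{F}_r\beta)$. The $\beta$-cyclic orbit codes are $\mathrm{Orb}_\beta(\mathcal{U})=\{\mathcal{U}\beta^j: 0\le j\le|\beta|-1\}$ and $\mathrm{Orb}_\beta(\mathcal{F})=\{\mathcal{F}\beta^j: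 0\le j\le |\beta|-1\}$ (as sets). *)

theory Defs
  imports "HOL-Computational_Algebra.Primes"
begin

text \<open>The ambient field F_{q^n} is a finite field type 'a; F_q is a subfield K of it.\<close>

definition is_subfield :: "'a::field set \<Rightarrow> bool" where
  "is_subfield K \<longleftrightarrow> 0 \<in> K \<and> 1 \<in> K \<and>
     (\<forall>x\<in>K. \<forall>y\<in>K. x + y \<in> K \<and> x * y \<in> K) \<and>
     (\<forall>x\<in>K. - x \<in> K) \<and> (\<forall>x\<in>K. x \<noteq> 0 \<longrightarrow> inverse x \<in> K)"

definition is_subspace :: "'a::field set \<Rightarrow> 'a set \<Rightarrow> bool" where
  "is_subspace K U \<longleftrightarrow> 0 \<in> U \<and> (\<forall>x\<in>U. \<forall>y\<in>U. x + y \<in> U) \<and>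
     (\<forall>c\<in>K. \<forall>x\<in>U. c * x \<in> U)"

definition lin_indep :: "'a::field set \<Rightarrow> 'a set \<Rightarrow> bool" where
  "lin_indep K B \<longleftrightarrow> (\<forall>c. (\<forall>b\<in>B. c b \<in> K) \<and> (\<Sum>b\<in>B. c b * b) = 0 \<longrightarrow> (\<forall>b\<in>B. c b = 0))"

definition lin_span :: "'a::field set \<Rightarrow> 'a set \<Rightarrow> 'a set" where
  "lin_span K B = {\<Sum>b\<in>B. c b * b | c. \<forall>b\<in>B. c b \<in> K}"

definition has_dim :: "'a::field set \<Rightarrow> 'a set \<Rightarrow> nat \<Rightarrow> bool" where
  "has_dim K U t \<longleftrightarrow> is_subspace K U \<and>
     (\<exists>B. finite B \<and> card B = t \<and> B \<subseteq> U \<and> lin_indep K B \<and> lin_span K B = U)"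

text \<open>Flag of type ts (lists indexed from 0): strictly increasing chain of subspaces.\<close>
definition is_flag :: "'a::field set \<Rightarrow> 'a set list \<Rightarrow> nat list \<Rightarrow> bool" where
  "is_flag K F ts \<longleftrightarrow> length F = length ts \<and> length F \<ge> 1 \<and>
     (\<forall>i<length F. has_dim K (F ! i) (ts ! i)) \<and>
     {0} \<subset> F ! 0 \<and>
     (\<forall>i. Suc i < length F \<longrightarrow> F ! i \<subset> F ! Suc i) \<and>
     F ! (length F - 1) \<subset> UNIV"

definition mult_order :: "'a::field \<Rightarrow> nat" where
  "mult_order b = (LEAST k. 0 < k \<and> b ^ k = 1)"

definition scale :: "'a::field set \<Rightarrow> 'a \<Rightarrow> 'a set" where
  "scale U b = (\<lambda>u. u * b) ` U"

definition orb :: "'a::field \<Rightarrow> 'a set \<Rightarrow> 'a set set" where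
  "orb b U = {scale U (b ^ j) | j. j < mult_order b}"

definition orb_flag :: "'a::field \<Rightarrow> 'a set list \<Rightarrow> 'a set list set" where
  "orb_flag b F = {map (\<lambda>U. scale U (b ^ j)) F | j. j < mult_order b}"

end

theory Submission
  imports Defs "HOL-Library.FuncSet"
begin

(* For any X, the sequence j -> X beta^j is periodic from the start, and its orbit has exactly as
   many elements as its least period. The flag F returns to itself only when every F_i does, so
   the period of F_i divides that of F. If U beta^d = U for a subspace U of size q^t, then
   multiplication by beta^d permutes U - {0}; comparing the products of the elements of U - {0}
   gives (beta^d)^(q^t - 1) = 1, so the order of beta^(q^t - 1) divides d. *)

definition period :: "(nat \<Rightarrow> 'b) \<Rightarrow> nat" where
  "period f = (LEAST d. 0 < d \<and> f d = f 0)"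

locale recurrent =
  fixes f :: "nat \<Rightarrow> 'b"
  assumes shift_cong: "f a = f a' \<Longrightarrow> f (a + b) = f (a' + b)"
    and recurs: "\<exists>m>0. f m = f 0"
begin

lemma period_pos: "0 < period f" and period_recurs: "f (period f) = f 0"
proof -
  obtain m where "0 < m" "f m = f 0" using recurs by blast
  then have "0 < period f \<and> f (period f) = f 0"
    unfolding period_def by (intro LeastI[where P = "\<lambda>d. 0 < d \<and> f d = f 0"]) blast
  then show "0 < period f" "f (period f) = f 0" by auto
qed

lemma not_recurs_below_period: "0 < k \<Longrightarrow> k < period f \<Longrightarrow> f k \<noteq> f 0"
  unfolding period_def using not_less_Least by blast

lemma eq_mod_period: "f k = f (k mod period f)"
proof (induction k rule: less_induct)
  case (less k)
  show ?case
  proof (cases "k < period f")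
    case False
    have "f k = f (period f + (k - period f))" using False by simp
    also have "\<dots> = f (0 + (k - period f))" by (rule shift_cong) (simp add: period_recurs)
    also have "\<dots> = f ((k - period f) mod period f)"
      using less[of "k - period f"] period_pos False by (simp only: add_0_left diff_less)
    also have "(k - period f) mod period f = k mod period f" using False by (simp add: mod_if)
    finally show ?thesis .
  qed simp
qed

lemma recurs_iff_period_dvd: "f k = f 0 \<longleftrightarrow> period f dvd k"
proof
  assume "f k = f 0"
  then have "f (k mod period f) = f 0" using eq_mod_period[of k] by simp
  then show "period f dvd k"
    using not_recurs_below_period[of "k mod period f"] period_pos by fastforce
next
  assume "period f dvd k"
  then show "f k = f 0" using eq_mod_period[of k] by simp
qed

lemma inj_on_period: "inj_on f {..<period f}"
proof (rule linorder_inj_onI')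
  fix a b assume "a \<in> {..<period f}" "b \<in> {..<period f}" "a < b"
  then have ab: "a < b" "b < period f" by auto
  show "f a \<noteq> f b"
  proof
    assume "f a = f b"
    then have "f (a + (period f - a)) = f (b + (period f - a))" by (rule shift_cong)
    moreover have "a + (period f - a) = period f" "b + (period f - a) = period f + (b - a)"
      using ab by auto
    ultimately have "f 0 = f (period f + (b - a))" using period_recurs by metis
    also have "\<dots> = f (0 + (b - a))" by (rule shift_cong) (rule period_recurs)
    finally have "f (b - a) = f 0" by simp
    moreover have "0 < b - a" "b - a < period f" using ab by auto
    ultimately show False using not_recurs_below_period by blast
  qed
qed

lemma card_orbit:
  assumes "0 < m" "f m = f 0"
  shows "card (f ` {..<m}) = period f"
proof -
  have "period f dvd m" using assms(2) recurs_iff_period_dvd by blast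
  then have "period f \<le> m" using assms(1) by (rule dvd_imp_le)
  then have "f ` {..<period f} \<subseteq> f ` {..<m}" by (intro image_mono) auto
  moreover have "f ` {..<m} \<subseteq> f ` {..<period f}"
  proof
    fix y assume "y \<in> f ` {..<m}"
    then obtain k where "y = f k" by blast
    then have "y = f (k mod period f)" using eq_mod_period[of k] by simp
    moreover have "k mod period f \<in> {..<period f}" using period_pos by simp
    ultimately show "y \<in> f ` {..<period f}" by blast
  qed
  ultimately have "f ` {..<m} = f ` {..<period f}" by blast
  then show ?thesis using card_image[OF inj_on_period] by simp
qed

end

lemma scale_scale: "scale (scale U x) y = scale U (x * y)"
  unfolding scale_def by (auto simp: image_image mult.assoc)

lemma scale_one: "scale U 1 = U"
  unfolding scale_def by simp

lemma scale_power_add: "scale U (b ^ (j + k)) = scale (scale U (b ^ j)) (b ^ k)"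
  by (simp add: scale_scale power_add)

lemma power_card_minus_one_if_scale_eq:
  fixes \<gamma> :: "'a::field"
  assumes "finite U" "0 \<in> U" "scale U \<gamma> = U" "\<gamma> \<noteq> 0"
  shows "\<gamma> ^ (card U - 1) = 1"
proof -
  define V where "V = U - {0}"
  have "finite V" using assms(1) V_def by simp
  have inj: "inj_on (\<lambda>u. u * \<gamma>) V" using assms(4) by (auto intro: inj_onI)
  have "(\<lambda>u. u * \<gamma>) ` V = (\<lambda>u. u * \<gamma>) ` U - {0}"
    using assms(4) unfolding V_def by auto
  then have perm: "(\<lambda>u. u * \<gamma>) ` V = V" using assms(3) unfolding scale_def V_def by simp
  have "prod id V = prod id ((\<lambda>u. u * \<gamma>) ` V)" using perm by simp
  also have "\<dots> = prod id V * \<gamma> ^ card V" by (simp add: prod.reindex[OF inj] prod.distrib)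
  finally have "\<gamma> ^ card V = 1" using \<open>finite V\<close> V_def by simp
  moreover have "card V = card U - 1" using assms(1,2) V_def by (simp add: card_Diff_singleton)
  ultimately show ?thesis by simp
qed

lemma power_card_minus_one_eq_one:
  fixes x :: "'a::{field,finite}"
  assumes "x \<noteq> 0"
  shows "x ^ (card (UNIV :: 'a set) - 1) = 1"
proof -
  have "scale UNIV x = UNIV"
    unfolding scale_def using assms by (metis surj_def nonzero_divide_eq_eq)
  then show ?thesis using power_card_minus_one_if_scale_eq[of UNIV x] assms by simp
qed

lemma one_less_card_field: "1 < card (UNIV :: 'a::{field,finite} set)"
  using card_2_iff'[of "{0, 1 :: 'a}"] card_mono[of UNIV "{0, 1 :: 'a}"] by simp

lemma recurrent_power:
  fixes x :: "'a::{field,finite}"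
  assumes "x \<noteq> 0"
  shows "recurrent (\<lambda>k. x ^ k)"
proof
  show "\<exists>m>0. x ^ m = x ^ 0"
    using power_card_minus_one_eq_one[OF assms] one_less_card_field
    by (intro exI[of _ "card (UNIV :: 'a set) - 1"]) simp
qed (simp add: power_add)

lemma mult_order_eq_period: "mult_order x = period (\<lambda>k. x ^ k)"
  unfolding mult_order_def period_def by simp

lemma
  fixes x :: "'a::{field,finite}"
  assumes "x \<noteq> 0"
  shows mult_order_pos: "0 < mult_order x"
    and power_mult_order: "x ^ mult_order x = 1"
    and mult_order_dvd_iff: "x ^ k = 1 \<longleftrightarrow> mult_order x dvd k"
  using recurrent.period_pos[OF recurrent_power] recurrent.period_recurs[OF recurrent_power]
    recurrent.recurs_iff_period_dvd[OF recurrent_power] assms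
  by (simp_all add: mult_order_eq_period)

lemma recurrent_scale_orbit:
  fixes \<beta> :: "'a::{field,finite}"
  assumes "\<beta> \<noteq> 0"
  shows "recurrent (\<lambda>j. scale U (\<beta> ^ j))"
proof
  show "\<exists>m>0. scale U (\<beta> ^ m) = scale U (\<beta> ^ 0)"
    using mult_order_pos[OF assms] power_mult_order[OF assms] by auto
qed (simp add: scale_power_add)

lemma recurrent_flag_orbit:
  fixes \<beta> :: "'a::{field,finite}"
  assumes "\<beta> \<noteq> 0"
  shows "recurrent (\<lambda>j. map (\<lambda>U. scale U (\<beta> ^ j)) F)"
proof
  show "\<exists>m>0. map (\<lambda>U. scale U (\<beta> ^ m)) F = map (\<lambda>U. scale U (\<beta> ^ 0)) F"
    using mult_order_pos[OF assms] power_mult_order[OF assms] by auto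
qed (simp add: scale_power_add)

lemma card_orb:
  fixes \<beta> :: "'a::{field,finite}"
  assumes "\<beta> \<noteq> 0"
  shows "card (orb \<beta> U) = period (\<lambda>j. scale U (\<beta> ^ j))"
proof -
  have "orb \<beta> U = (\<lambda>j. scale U (\<beta> ^ j)) ` {..<mult_order \<beta>}"
    unfolding orb_def by auto
  then show ?thesis
    using recurrent.card_orbit[OF recurrent_scale_orbit[OF assms]]
      mult_order_pos[OF assms] power_mult_order[OF assms] by simp
qed

lemma card_orb_flag:
  fixes \<beta> :: "'a::{field,finite}"
  assumes "\<beta> \<noteq> 0"
  shows "card (orb_flag \<beta> F) = period (\<lambda>j. map (\<lambda>U. scale U (\<beta> ^ j)) F)"
proof -
  have "orb_flag \<beta> F = (\<lambda>j. map (\<lambda>U. scale U (\<beta> ^ j)) F) ` {..<mult_order \<beta>}"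
    unfolding orb_flag_def by auto
  then show ?thesis
    using recurrent.card_orbit[OF recurrent_flag_orbit[OF assms]]
      mult_order_pos[OF assms] power_mult_order[OF assms] by simp
qed

lemma card_orb_dvd_card_orb_flag:
  fixes \<beta> :: "'a::{field,finite}"
  assumes "\<beta> \<noteq> 0" "i < length F"
  shows "card (orb \<beta> (F ! i)) dvd card (orb_flag \<beta> F)"
proof -
  let ?g = "\<lambda>j. map (\<lambda>U. scale U (\<beta> ^ j)) F"
  let ?f = "\<lambda>j. scale (F ! i) (\<beta> ^ j)"
  have "?f j = ?g j ! i" for j using assms(2) by simp
  then have "?f (period ?g) = ?f 0"
    using recurrent.period_recurs[OF recurrent_flag_orbit[OF assms(1)]] by metis
  then show ?thesis
    using recurrent.recurs_iff_period_dvd[OF recurrent_scale_orbit[OF assms(1)]]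
    by (simp add: card_orb card_orb_flag assms(1))
qed

lemma mult_order_power_dvd_card_orb:
  fixes \<beta> :: "'a::{field,finite}"
  assumes "\<beta> \<noteq> 0" "0 \<in> U"
  shows "mult_order (\<beta> ^ (card U - 1)) dvd card (orb \<beta> U)"
proof -
  let ?d = "period (\<lambda>j. scale U (\<beta> ^ j))"
  have "scale U (\<beta> ^ ?d) = U"
    using recurrent.period_recurs[OF recurrent_scale_orbit[OF assms(1)]] by (simp add: scale_one)
  then have "(\<beta> ^ ?d) ^ (card U - 1) = 1"
    using assms by (intro power_card_minus_one_if_scale_eq) auto
  then have "(\<beta> ^ (card U - 1)) ^ ?d = 1" by (simp add: power_mult[symmetric] mult.commute)
  then show ?thesis using assms(1) by (simp add: mult_order_dvd_iff card_orb)
qed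

lemma card_eq_power_dim:
  fixes K U :: "'a::field set"
  assumes "is_subfield K" "has_dim K U t"
  shows "card U = card K ^ t"
proof -
  obtain B where B: "finite B" "card B = t" "lin_indep K B" "lin_span K B = U"
    using assms(2) unfolding has_dim_def by blast
  define comb where "comb c = (\<Sum>b\<in>B. c b * b)" for c :: "'a \<Rightarrow> 'a"
  have "comb ` (B \<rightarrow>\<^sub>E K) = U"
  proof
    show "comb ` (B \<rightarrow>\<^sub>E K) \<subseteq> U" using B(4) unfolding lin_span_def comb_def by auto
    show "U \<subseteq> comb ` (B \<rightarrow>\<^sub>E K)"
    proof
      fix u assume "u \<in> U"
      then obtain c where c: "u = comb c" "\<forall>b\<in>B. c b \<in> K"
        using B(4) unfolding lin_span_def comb_def by blast
      have "comb (restrict c B) = u" unfolding c comb_def by (rule sum.cong) auto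
      moreover have "restrict c B \<in> B \<rightarrow>\<^sub>E K" using c by auto
      ultimately show "u \<in> comb ` (B \<rightarrow>\<^sub>E K)" by blast
    qed
  qed
  moreover have "inj_on comb (B \<rightarrow>\<^sub>E K)"
  proof (rule inj_onI)
    fix c c' assume cc: "c \<in> B \<rightarrow>\<^sub>E K" "c' \<in> B \<rightarrow>\<^sub>E K" "comb c = comb c'"
    have "(\<Sum>b\<in>B. (c b - c' b) * b) = comb c - comb c'"
      unfolding comb_def by (simp add: left_diff_distrib sum_subtractf)
    then have "(\<Sum>b\<in>B. (c b - c' b) * b) = 0" using cc(3) by simp
    moreover have "\<forall>b\<in>B. c b - c' b \<in> K"
      using cc(1,2) assms(1) unfolding is_subfield_def by (metis PiE_mem diff_conv_add_uminus)
    ultimately have "\<forall>b\<in>B. c b - c' b = 0"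
      using B(3) unfolding lin_indep_def by (elim allE[where x = "\<lambda>b. c b - c' b"]) blast
    then show "c = c'" using cc(1,2) by (intro extensionalityI[of _ B]) (auto simp: PiE_iff)
  qed
  ultimately have "card U = card (B \<rightarrow>\<^sub>E K)" using card_image by fastforce
  also have "\<dots> = card K ^ t" using B(1,2) by (simp add: card_PiE)
  finally show ?thesis .
qed

theorem proposition3p5:
  fixes K :: "'a::{field,finite} set" and q n :: nat
    and F :: "'a set list" and ts :: "nat list" and \<beta> :: 'a
  assumes "\<exists>p k. prime p \<and> 0 < k \<and> q = p ^ k"
    and "n \<ge> 2"
    and "card (UNIV :: 'a set) = q ^ n"
    and "is_subfield K" and "card K = q"
    and "is_flag K F ts"
    and "\<beta> \<noteq> 0"
  shows "(\<forall>i<length F. card (orb \<beta> (F ! i)) dvd card (orb_flag \<beta> F)) \<and>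
         Lcm {mult_order (\<beta> ^ (q ^ (ts ! i) - 1)) | i. i < length F} dvd card (orb_flag \<beta> F)"
proof -
  have orb_dvd: "card (orb \<beta> (F ! i)) dvd card (orb_flag \<beta> F)" if "i < length F" for i
    using card_orb_dvd_card_orb_flag assms(7) that by blast
  have "mult_order (\<beta> ^ (q ^ (ts ! i) - 1)) dvd card (orb_flag \<beta> F)" if "i < length F" for i
  proof -
    have dim: "has_dim K (F ! i) (ts ! i)" using assms(6) that unfolding is_flag_def by blast
    then have "0 \<in> F ! i" unfolding has_dim_def is_subspace_def by blast
    moreover have "card (F ! i) = q ^ (ts ! i)" using card_eq_power_dim[OF assms(4) dim] assms(5) by simp
    ultimately show ?thesis
      using mult_order_power_dvd_card_orb[OF assms(7)] orb_dvd[OF that] dvd_trans by metis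
  qed
  then show ?thesis using orb_dvd by (auto intro!: Lcm_least)
qed

end
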